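(* Let $n\geq 1$ and let $R_\bullet$, $\Omega(R_\bullet)$, $N_*$, $D_*$, $\omega_q$, $\alpha_q$, $\beta_q$, $(\omega_q)_i$, $(\omega_q)_{i,j}$ be as in the context. Then for every $q\geq 0$: if $n$ is odd, $\omega_q$ is a cycle in $N_q\Omega(R_\bullet)$ (i.e. $\omega_q\in N_q\Omega(R_\bullet)$ and $d_0\omega_q=0$); if $n$ is even, $\alpha_q$ and $\beta_q$ are cycles in $N_q\Omega(R_\bullet)$. Furthermore, for any $n$, the elements $(\omega_{q+1})_r$, $(\omega_{q+1})_{j,k}$ and $y_r(\omega_{q+1})_{j,k}$ lie in $D_{q+1}\Omega(R_\bullet)$ for all $1\leq j<k\leq q+1$ and $1\leq r\leq q+1$.
   Context: All algebras are over $\mathbb{F}_2$ and (graded) commutative. Fix integers $n\geq 1$ and $|x|\geq 1$. Let $R_\bullet$ be the simplicial graded $\mathbb{F}_2$-algebra with $R_q=\mathbb{F}_2[x,y_1,\dots,y_q]$ ($q\geq 0$), $|y_i|=(n+1)|x|$, whose face maps $d_i:R_q\to R_{q-1}$ and degeneracy maps $s_i:R_q\to R_{q+1}$ ($0\le i\le q$) are the algebra maps given by $s_i(x)=x$, $d_i(x)=x$, $s_i(y_j)=y_j$ if $i\geq j$ and $s_i(y_j)=y_{j+1}$ if $i<j$; and $d_i(y_j)=x^{n+1}$ if $i=0,j=1$; $d_i(y_j)=y_{j-1}$ if $i<j$, $j>1$; $d_i(y_j)=y_j$ if $i\geq j$, $j<q$; $d_q(y_q)=0$. For a graded commutative $\mathbb{F}_2$-algebra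 $A$, the de Rham complex $\Omega(A)$ is the free $A$-algebra on generators ${\bf d}a$ ($a\in A$), $|{\bf d}a|=|a|-1$, modulo ${\bf d}(a+b)={\bf d}a+{\bf d}b$, ${\bf d}(ab)=({\bf d}a)b+a{\bf d}b$, $({\bf d}a)^2=0$; it is functorial, so $\Omega(R_\bullet)$ is a simplicial algebra. For a simplicial $\mathbb{F}_2$-vector space $V$, $N_q(V)=\bigcap_{1\le i\le q}\ker(d_i)$ is the normalized complex with differential $d_0$, and $D_q(V)\subseteq V_q$ is the subspace spanned by degenerate elements (images of the $s_i$). In $\Omega(R_q)$ put $\omega_q={\bf d}y_1\cdots{\bf d}y_q$ for $q>0$, $\omega_0=1$; $(\omega_q)_i$ is $\omega_q$ with the factor ${\bf d}y_i$ omitted and $(\omega_q)_{i,j}$ ($i<j$) is $\omega_q$ with ${\bf d}y_i,{\bf d}y_j$ omitted; $\alpha_q={\bf d}x\,\omega_q$ and $\beta_q=x\omega_q+{\bf d}x\sum_{i=1}^q y_i(\omega_q)_i$ for $q>0$, $\alpha_0={\bf d}x$, $\beta_0=x$. *)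

theory Defs
  imports "HOL-Library.Poly_Mapping" "HOL-Library.Z2"
begin

text \<open>Variables of the polynomial ring in which we model the de Rham complex
  Omega(R_q) = F2[x,y_1..y_q] tensor Lambda[dx,dy_1..dy_q]:
  X = x, Y j = y_j, DX = dx, DY j = dy_j.\<close>
datatype var = X | Y nat | DX | DY nat

type_synonym poly2 = "(var \<Rightarrow>\<^sub>0 nat) \<Rightarrow>\<^sub>0 bit"

definition Var :: "var \<Rightarrow> poly2" where
  "Var v = Poly_Mapping.single (Poly_Mapping.single v 1) 1"

definition monom :: "(var \<Rightarrow>\<^sub>0 nat) \<Rightarrow> poly2" where
  "monom m = Poly_Mapping.single m 1"

definition is_dvar :: "var \<Rightarrow> bool" where
  "is_dvar v = (case v of DX \<Rightarrow> True | DY _ \<Rightarrow> True | _ \<Rightarrow> False)"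

text \<open>A monomial is reduced if every differential occurs with exponent at most 1
  (the relations (da)^2 = 0).\<close>
definition reduced_mon :: "(var \<Rightarrow>\<^sub>0 nat) \<Rightarrow> bool" where
  "reduced_mon m = (\<forall>v. is_dvar v \<longrightarrow> Poly_Mapping.lookup m v \<le> 1)"

text \<open>Quotient map F2[x,y,dx,dy] -> Omega: kill non-reduced monomials.
  This is a ring homomorphism; reduced polynomials are the normal forms.\<close>
definition red :: "poly2 \<Rightarrow> poly2" where
  "red p = Abs_poly_mapping (\<lambda>m. if reduced_mon m then Poly_Mapping.lookup p m else 0)"

definition subst :: "(var \<Rightarrow> poly2) \<Rightarrow> poly2 \<Rightarrow> poly2" where
  "subst f p = (\<Sum>m\<in>Poly_Mapping.keys p. Poly_Mapping.single 0 (Poly_Mapping.lookup p m) *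
                              (\<Prod>v\<in>Poly_Mapping.keys m. f v ^ Poly_Mapping.lookup m v))"

definition dvar :: "var \<Rightarrow> var" where
  "dvar v = (case v of X \<Rightarrow> DX | Y j \<Rightarrow> DY j | _ \<Rightarrow> undefined)"

text \<open>The universal derivation d : F2[x,y_1,...] -> Omega (Kaehler differential),
  applied to polynomials in the variables X, Y j only.\<close>
definition dd :: "poly2 \<Rightarrow> poly2" where
  "dd p = (\<Sum>m\<in>Poly_Mapping.keys p. Poly_Mapping.single 0 (Poly_Mapping.lookup p m) *
             (\<Sum>v\<in>Poly_Mapping.keys m. of_nat (Poly_Mapping.lookup m v) *
                 (monom (m - Poly_Mapping.single v 1) * Var (dvar v))))"

definition allowed :: "nat \<Rightarrow> var set" where
  "allowed q = {X, DX} \<union> Y ` {1..q} \<union> DY ` {1..q}"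

definition Om :: "nat \<Rightarrow> poly2 set" where
  "Om q = {p. (\<forall>m\<in>Poly_Mapping.keys p. reduced_mon m \<and> Poly_Mapping.keys m \<subseteq> allowed q)}"

definition face_y :: "nat \<Rightarrow> nat \<Rightarrow> nat \<Rightarrow> nat \<Rightarrow> poly2" where
  "face_y n q i j =
     (if i = 0 \<and> j = 1 then Var X ^ (n + 1)
      else if i < j then Var (Y (j - 1))
      else if j < q then Var (Y j)
      else 0)"

definition degen_y :: "nat \<Rightarrow> nat \<Rightarrow> poly2" where
  "degen_y i j = (if i \<ge> j then Var (Y j) else Var (Y (j + 1)))"

definition omega_map :: "(nat \<Rightarrow> poly2) \<Rightarrow> var \<Rightarrow> poly2" where
  "omega_map g v = (case v of X \<Rightarrow> Var X | DX \<Rightarrow> Var DX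
                      | Y j \<Rightarrow> g j | DY j \<Rightarrow> dd (g j))"

definition faceO :: "nat \<Rightarrow> nat \<Rightarrow> nat \<Rightarrow> poly2 \<Rightarrow> poly2" where
  "faceO n q i p = red (subst (omega_map (face_y n q i)) p)"

definition degenO :: "nat \<Rightarrow> poly2 \<Rightarrow> poly2" where
  "degenO i p = red (subst (omega_map (degen_y i)) p)"

definition Nq :: "nat \<Rightarrow> nat \<Rightarrow> poly2 set" where
  "Nq n q = {p \<in> Om q. \<forall>i\<in>{1..q}. faceO n q i p = 0}"

definition is_cycle :: "nat \<Rightarrow> nat \<Rightarrow> poly2 \<Rightarrow> bool" where
  "is_cycle n q p = (p \<in> Nq n q \<and> (q > 0 \<longrightarrow> faceO n q 0 p = 0))"

text \<open>F2-span (= finite subset sums) and degenerate subspace D_q.\<close>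
definition f2span :: "poly2 set \<Rightarrow> poly2 set" where
  "f2span S = {sum id F | F. finite F \<and> F \<subseteq> S}"

definition Dq :: "nat \<Rightarrow> poly2 set" where
  "Dq q = f2span (\<Union>i\<in>{i. i + 1 \<le> q}. degenO i ` Om (q - 1))"

definition omega :: "nat \<Rightarrow> poly2" where
  "omega q = red (\<Prod>j\<in>{1..q}. Var (DY j))"

definition omega_i :: "nat \<Rightarrow> nat \<Rightarrow> poly2" where
  "omega_i q i = red (\<Prod>j\<in>{1..q} - {i}. Var (DY j))"

definition omega_ij :: "nat \<Rightarrow> nat \<Rightarrow> nat \<Rightarrow> poly2" where
  "omega_ij q i k = red (\<Prod>j\<in>{1..q} - {i, k}. Var (DY j))"

definition alpha :: "nat \<Rightarrow> poly2" where
  "alpha q = red (Var DX * omega q)"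

definition beta :: "nat \<Rightarrow> poly2" where
  "beta q = red (Var X * omega q + Var DX * (\<Sum>i\<in>{1..q}. Var (Y i) * omega_i q i))"

end

theory Submission
  imports Defs
begin

text \<open>All maps of the simplicial algebra act on forms by substitution followed by reduction
  modulo the squares of differentials, so it suffices to compute on products of differentials.
  For \<open>1 \<le> i < q\<close> the face \<open>d\<^sub>i\<close> sends both \<open>y\<^sub>i\<close> and \<open>y\<^bsub>i+1\<^esub>\<close> to \<open>y\<^sub>i\<close>, so every form
  containing \<open>dy\<^sub>i dy\<^bsub>i+1\<^esub>\<close> maps to a multiple of \<open>(dy\<^sub>i)\<^sup>2 = 0\<close>; the only other terms of
  \<open>d\<^sub>i \<beta>\<^sub>q\<close>, where one of these two factors is replaced by \<open>y\<^sub>i\<close> resp. \<open>y\<^bsub>i+1\<^esub>\<close>, coincide and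
  cancel in characteristic 2. The last face kills \<open>y\<^sub>q\<close> and hence \<open>dy\<^sub>q\<close>. The face \<open>d\<^sub>0\<close> sends
  \<open>dy\<^sub>1\<close> to \<open>(n+1) x\<^sup>n dx\<close>: this vanishes for odd \<open>n\<close>, meets the factor \<open>dx\<close> of \<open>\<alpha>\<^sub>q\<close> for even
  \<open>n\<close>, and leaves exactly two equal terms of \<open>d\<^sub>0 \<beta>\<^sub>q\<close>. Finally, the degeneracy \<open>s\<^sub>i\<close> maps the
  indices \<open>1..q\<close> monotonically onto \<open>1..q+1\<close> minus \<open>i+1\<close>, so every product of differentials
  omitting an index is degenerate.\<close>

section \<open>Substitution and reduction\<close>

lemma poly_mapping_sum_single:
  "p = (\<Sum>m\<in>Poly_Mapping.keys p. Poly_Mapping.single m (Poly_Mapping.lookup p m))"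
  by (rule poly_mapping_eqI) (simp add: lookup_sum lookup_single when_def in_keys_iff)

definition subst_mon :: "(var \<Rightarrow> poly2) \<Rightarrow> (var \<Rightarrow>\<^sub>0 nat) \<Rightarrow> poly2" where
  "subst_mon f m = (\<Prod>v\<in>Poly_Mapping.keys m. f v ^ Poly_Mapping.lookup m v)"

lemma subst_mon_eq_prod:
  "finite T \<Longrightarrow> Poly_Mapping.keys m \<subseteq> T \<Longrightarrow>
    subst_mon f m = (\<Prod>v\<in>T. f v ^ Poly_Mapping.lookup m v)"
  unfolding subst_mon_def by (rule prod.mono_neutral_left) (auto simp: in_keys_iff)

lemma subst_mon_add: "subst_mon f (a + b) = subst_mon f a * subst_mon f b"
proof -
  let ?T = "Poly_Mapping.keys a \<union> Poly_Mapping.keys b"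
  have "subst_mon f (a + b) = (\<Prod>v\<in>?T. f v ^ Poly_Mapping.lookup (a + b) v)"
    by (rule subst_mon_eq_prod) (auto dest: subsetD[OF keys_add])
  also have "\<dots> = (\<Prod>v\<in>?T. f v ^ Poly_Mapping.lookup a v) * (\<Prod>v\<in>?T. f v ^ Poly_Mapping.lookup b v)"
    by (simp add: lookup_add power_add prod.distrib)
  also have "\<dots> = subst_mon f a * subst_mon f b"
    by (subst (1 2) subst_mon_eq_prod[of ?T]) auto
  finally show ?thesis .
qed

lemma subst_eq_sum:
  "finite T \<Longrightarrow> Poly_Mapping.keys p \<subseteq> T \<Longrightarrow>
    subst f p = (\<Sum>m\<in>T. Poly_Mapping.single 0 (Poly_Mapping.lookup p m) * subst_mon f m)"
  unfolding subst_def subst_mon_def[symmetric]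
  by (rule sum.mono_neutral_left) (auto simp: in_keys_iff)

lemma subst_add: "subst f (p + q) = subst f p + subst f q"
proof -
  let ?T = "Poly_Mapping.keys p \<union> Poly_Mapping.keys q"
  have "subst f (p + q) =
      (\<Sum>m\<in>?T. Poly_Mapping.single 0 (Poly_Mapping.lookup (p + q) m) * subst_mon f m)"
    by (rule subst_eq_sum) (auto dest: subsetD[OF keys_add])
  also have "\<dots> = (\<Sum>m\<in>?T. Poly_Mapping.single 0 (Poly_Mapping.lookup p m) * subst_mon f m)
      + (\<Sum>m\<in>?T. Poly_Mapping.single 0 (Poly_Mapping.lookup q m) * subst_mon f m)"
    by (simp only: lookup_add single_add distrib_right sum.distrib)
  also have "\<dots> = subst f p + subst f q"
    by (subst (1 2) subst_eq_sum[of ?T]) auto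
  finally show ?thesis .
qed

lemma subst_zero: "subst f 0 = 0"
  by (simp add: subst_def)

lemma subst_sum: "subst f (\<Sum>i\<in>I. p i) = (\<Sum>i\<in>I. subst f (p i))"
  by (induction I rule: infinite_finite_induct) (auto simp: subst_zero subst_add)

lemma subst_single: "subst f (Poly_Mapping.single m c) = Poly_Mapping.single 0 c * subst_mon f m"
  by (simp add: subst_def subst_mon_def)

lemma subst_mult: "subst f (p * q) = subst f p * subst f q"
proof -
  let ?c = "\<lambda>p m. Poly_Mapping.single 0 (Poly_Mapping.lookup p m) :: poly2"
  have "p * q = (\<Sum>a\<in>Poly_Mapping.keys p. Poly_Mapping.single a (Poly_Mapping.lookup p a)) *
                (\<Sum>b\<in>Poly_Mapping.keys q. Poly_Mapping.single b (Poly_Mapping.lookup q b))"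
    by (simp flip: poly_mapping_sum_single)
  also have "\<dots> = (\<Sum>a\<in>Poly_Mapping.keys p. \<Sum>b\<in>Poly_Mapping.keys q.
      Poly_Mapping.single (a + b) (Poly_Mapping.lookup p a * Poly_Mapping.lookup q b))"
    by (simp add: sum_product mult_single)
  finally have "subst f (p * q) = (\<Sum>a\<in>Poly_Mapping.keys p. \<Sum>b\<in>Poly_Mapping.keys q.
      (?c p a * subst_mon f a) * (?c q b * subst_mon f b))"
    by (simp add: subst_sum subst_single subst_mon_add mult_single ac_simps)
  also have "\<dots> = subst f p * subst f q"
    by (simp add: subst_def subst_mon_def sum_product)
  finally show ?thesis .
qed

lemma subst_Var: "subst f (Var v) = f v"
  by (simp add: Var_def subst_single subst_mon_def)

lemma subst_one: "subst f 1 = 1"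
  by (simp add: subst_def subst_mon_def)

lemma subst_prod: "subst f (\<Prod>i\<in>I. p i) = (\<Prod>i\<in>I. subst f (p i))"
  by (induction I rule: infinite_finite_induct) (auto simp: subst_one subst_mult)

lemma lookup_red:
  "Poly_Mapping.lookup (red p) m = (if reduced_mon m then Poly_Mapping.lookup p m else 0)"
proof -
  have "finite {m. (if reduced_mon m then Poly_Mapping.lookup p m else 0) \<noteq> 0}"
    by (rule finite_subset[OF _ finite_lookup[of p]]) auto
  then show ?thesis unfolding red_def by simp
qed

lemma red_add: "red (p + q) = red p + red q"
  by (rule poly_mapping_eqI) (simp only: lookup_red lookup_add, simp)

lemma red_zero: "red 0 = 0"
  by (rule poly_mapping_eqI) (simp add: lookup_red)

lemma red_sum: "red (\<Sum>i\<in>I. p i) = (\<Sum>i\<in>I. red (p i))"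
  by (induction I rule: infinite_finite_induct) (auto simp: red_zero red_add)

lemma red_single:
  "red (Poly_Mapping.single m c) = (if reduced_mon m then Poly_Mapping.single m c else 0)"
  by (rule poly_mapping_eqI) (simp add: lookup_red lookup_single when_def)

lemma red_dvar_square_mult:
  assumes "is_dvar w"
  shows "red (Var w * (Var w * p)) = 0"
proof -
  let ?w2 = "Poly_Mapping.single w 1 + Poly_Mapping.single w 1"
  have "Var w * (Var w * p) =
      (\<Sum>b\<in>Poly_Mapping.keys p. Var w * (Var w * Poly_Mapping.single b (Poly_Mapping.lookup p b)))"
    by (subst poly_mapping_sum_single[of p]) (simp only: sum_distrib_left)
  also have "\<dots> = (\<Sum>b\<in>Poly_Mapping.keys p. Poly_Mapping.single (?w2 + b) (Poly_Mapping.lookup p b))"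
    by (simp only: Var_def mult_single mult_1 add.assoc)
  finally have expand: "Var w * (Var w * p) = \<dots>" .
  have "\<not> reduced_mon (?w2 + b)" for b
    using assms unfolding reduced_mon_def by (auto simp: lookup_add intro!: exI[of _ w])
  then show ?thesis unfolding expand red_sum red_single by simp
qed

lemma poly2_add_self [simp]: "(p :: poly2) + p = 0"
proof -
  have "(2 :: poly2) = Poly_Mapping.single 0 2"
    by (simp only: single_numeral)
  then have "(2 :: poly2) = 0" by simp
  moreover have "p + p = 2 * p" by simp
  ultimately show ?thesis by simp
qed

lemma of_nat_poly2: "(of_nat k :: poly2) = (if even k then 0 else 1)"
  by (induction k) auto

section \<open>Products of distinct variables\<close>

lemma Var_power: "Var v ^ k = Poly_Mapping.single (Poly_Mapping.single v k) 1"
  by (induction k) (simp_all add: Var_def mult_single single_add[symmetric])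

lemma prod_Var:
  "finite A \<Longrightarrow> (\<Prod>v\<in>A. Var v) = Poly_Mapping.single (\<Sum>v\<in>A. Poly_Mapping.single v 1) 1"
  by (induction A rule: finite_induct) (simp_all add: Var_def mult_single)

lemma lookup_sum_single_one:
  "finite A \<Longrightarrow> Poly_Mapping.lookup (\<Sum>v\<in>A. Poly_Mapping.single v (Suc 0)) w = (if w \<in> A then 1 else 0)"
  by (simp add: lookup_sum lookup_single when_def)

lemma red_prod_Var: "finite A \<Longrightarrow> red (\<Prod>v\<in>A. Var v) = (\<Prod>v\<in>A. Var v)"
  by (simp add: prod_Var red_single reduced_mon_def lookup_sum_single_one)

lemma prod_Var_in_Om: "finite A \<Longrightarrow> A \<subseteq> allowed q \<Longrightarrow> (\<Prod>v\<in>A. Var v) \<in> Om q"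
  by (auto simp: prod_Var Om_def reduced_mon_def lookup_sum_single_one in_keys_iff split: if_splits)

lemma Om_add: "p \<in> Om q \<Longrightarrow> p' \<in> Om q \<Longrightarrow> p + p' \<in> Om q"
  unfolding Om_def using keys_add[of p p'] by blast

lemma zero_in_Om: "0 \<in> Om q"
  by (simp add: Om_def)

lemma Om_sum: "(\<And>i. i \<in> I \<Longrightarrow> p i \<in> Om q) \<Longrightarrow> (\<Sum>i\<in>I. p i) \<in> Om q"
  by (induction I rule: infinite_finite_induct) (simp_all add: zero_in_Om Om_add)

definition dy_prod :: "nat set \<Rightarrow> poly2" where
  "dy_prod S = (\<Prod>j\<in>S. Var (DY j))"

lemma dy_prod_eq_prod_Var: "dy_prod S = (\<Prod>v\<in>DY ` S. Var v)"
  by (simp add: dy_prod_def prod.reindex inj_on_def)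

lemma Var_mult_dy_prod:
  "finite S \<Longrightarrow> (\<And>j. a \<noteq> DY j) \<Longrightarrow> Var a * dy_prod S = (\<Prod>v\<in>insert a (DY ` S). Var v)"
  by (auto simp: dy_prod_eq_prod_Var prod.insert_if)

lemma Var_mult_Var_mult_dy_prod:
  "finite S \<Longrightarrow> (\<And>j. a \<noteq> DY j) \<Longrightarrow> (\<And>j. b \<noteq> DY j) \<Longrightarrow> a \<noteq> b \<Longrightarrow>
    Var a * (Var b * dy_prod S) = (\<Prod>v\<in>insert a (insert b (DY ` S)). Var v)"
  by (auto simp: Var_mult_dy_prod prod.insert_if)

lemma red_dy_prod: "finite S \<Longrightarrow> red (dy_prod S) = dy_prod S"
  by (simp add: dy_prod_eq_prod_Var red_prod_Var)

lemma red_Var_mult_dy_prod: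
  "finite S \<Longrightarrow> (\<And>j. a \<noteq> DY j) \<Longrightarrow> red (Var a * dy_prod S) = Var a * dy_prod S"
  by (simp add: Var_mult_dy_prod red_prod_Var)

lemma red_Var_mult_Var_mult_dy_prod:
  "finite S \<Longrightarrow> (\<And>j. a \<noteq> DY j) \<Longrightarrow> (\<And>j. b \<noteq> DY j) \<Longrightarrow> a \<noteq> b \<Longrightarrow>
    red (Var a * (Var b * dy_prod S)) = Var a * (Var b * dy_prod S)"
  by (simp add: Var_mult_Var_mult_dy_prod red_prod_Var)

lemma DY_image_allowed: "S \<subseteq> {1..q} \<Longrightarrow> DY ` S \<subseteq> allowed q"
  by (auto simp: allowed_def)

lemma dy_prod_in_Om: "S \<subseteq> {1..q} \<Longrightarrow> dy_prod S \<in> Om q"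
  using finite_subset[of S "{1..q}"] DY_image_allowed[of S q]
  by (simp add: dy_prod_eq_prod_Var prod_Var_in_Om)

lemma Var_mult_dy_prod_in_Om:
  "S \<subseteq> {1..q} \<Longrightarrow> a \<in> allowed q \<Longrightarrow> (\<And>j. a \<noteq> DY j) \<Longrightarrow> Var a * dy_prod S \<in> Om q"
  using finite_subset[of S "{1..q}"] DY_image_allowed[of S q]
  by (simp add: Var_mult_dy_prod prod_Var_in_Om)

lemma Var_mult_Var_mult_dy_prod_in_Om:
  "S \<subseteq> {1..q} \<Longrightarrow> a \<in> allowed q \<Longrightarrow> b \<in> allowed q \<Longrightarrow> (\<And>j. a \<noteq> DY j) \<Longrightarrow> (\<And>j. b \<noteq> DY j) \<Longrightarrow>
    a \<noteq> b \<Longrightarrow> Var a * (Var b * dy_prod S) \<in> Om q"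
  using finite_subset[of S "{1..q}"] DY_image_allowed[of S q]
  by (simp add: Var_mult_Var_mult_dy_prod prod_Var_in_Om)

lemma omega_eq: "omega q = dy_prod {1..q}"
  by (simp add: omega_def red_dy_prod flip: dy_prod_def)

lemma omega_i_eq: "omega_i q i = dy_prod ({1..q} - {i})"
  by (simp add: omega_i_def red_dy_prod flip: dy_prod_def)

lemma omega_ij_eq: "omega_ij q i k = dy_prod ({1..q} - {i, k})"
  by (simp add: omega_ij_def red_dy_prod flip: dy_prod_def)

lemma alpha_eq: "alpha q = Var DX * dy_prod {1..q}"
  by (simp add: alpha_def omega_eq red_Var_mult_dy_prod)

lemma beta_eq: "beta q = Var X * dy_prod {1..q} +
    (\<Sum>l\<in>{1..q}. Var DX * (Var (Y l) * dy_prod ({1..q} - {l})))"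
  by (simp add: beta_def omega_eq omega_i_eq red_add red_sum sum_distrib_left
      red_Var_mult_dy_prod red_Var_mult_Var_mult_dy_prod)

lemma omega_in_Om: "omega q \<in> Om q"
  by (simp add: omega_eq dy_prod_in_Om)

lemma alpha_in_Om: "alpha q \<in> Om q"
  by (simp add: alpha_eq Var_mult_dy_prod_in_Om allowed_def)

lemma beta_in_Om: "beta q \<in> Om q"
  unfolding beta_eq
  by (intro Om_add Om_sum Var_mult_dy_prod_in_Om Var_mult_Var_mult_dy_prod_in_Om)
    (auto simp: allowed_def)

lemma dd_Var: "dd (Var v) = Var (dvar v)"
  by (simp add: Var_def dd_def monom_def)

lemma dd_Var_power: "dd (Var v ^ Suc k) = of_nat (Suc k) * (Var v ^ k * Var (dvar v))"
proof -
  have "Poly_Mapping.single v (Suc k) - Poly_Mapping.single v 1 = Poly_Mapping.single v k"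
    by (rule poly_mapping_eqI) (simp add: lookup_minus lookup_single when_def)
  then show ?thesis
    by (simp only: Var_power dd_def) (simp add: monom_def)
qed

lemma dd_X_power_odd: "odd n \<Longrightarrow> dd (Var X ^ Suc n) = 0"
  by (simp only: dd_Var_power of_nat_poly2) simp

lemma dd_X_power_even: "even n \<Longrightarrow> dd (Var X ^ Suc n) = Var X ^ n * Var DX"
  by (simp only: dd_Var_power of_nat_poly2) (simp add: dvar_def)

section \<open>Face maps\<close>

lemma prod_collision:
  assumes "finite S" "a \<in> S" "b \<in> S" "a \<noteq> b" "f a = f b"
  shows "prod f S = f a * (f a * prod f (S - {a, b}))"
  using assms by (simp add: prod.remove[of S a] prod.remove[of "S - {a}" b] insert_commute
      flip: Diff_insert2)

lemma prod_remove_collision: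
  assumes "finite S" "a \<in> S" "b \<in> S" "a \<noteq> b" "f a = f b"
  shows "prod f (S - {a}) = prod f (S - {b})"
  using assms by (simp add: prod.remove[of "S - {a}" b] prod.remove[of "S - {b}" a]
      Diff_insert2[symmetric] insert_commute)

lemma omega_map_simps [simp]:
  "omega_map g X = Var X" "omega_map g DX = Var DX"
  "omega_map g (Y j) = g j" "omega_map g (DY j) = dd (g j)"
  by (simp_all add: omega_map_def)

definition face_dy_prod :: "nat \<Rightarrow> nat \<Rightarrow> nat \<Rightarrow> nat set \<Rightarrow> poly2" where
  "face_dy_prod n q i S = (\<Prod>j\<in>S. dd (face_y n q i j))"

lemma subst_face_dy_prod: "subst (omega_map (face_y n q i)) (dy_prod S) = face_dy_prod n q i S"
  by (simp add: dy_prod_def face_dy_prod_def subst_prod subst_Var)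

lemma faceO_omega: "faceO n q i (omega q) = red (face_dy_prod n q i {1..q})"
  by (simp add: faceO_def omega_eq subst_face_dy_prod)

lemma faceO_alpha: "faceO n q i (alpha q) = red (Var DX * face_dy_prod n q i {1..q})"
  by (simp add: faceO_def alpha_eq subst_mult subst_Var subst_face_dy_prod)

lemma faceO_beta: "faceO n q i (beta q) = red (Var X * face_dy_prod n q i {1..q}) +
    (\<Sum>l\<in>{1..q}. red (Var DX * (face_y n q i l * face_dy_prod n q i ({1..q} - {l}))))"
  by (simp add: faceO_def beta_eq subst_add subst_sum subst_mult subst_Var subst_face_dy_prod
      red_add red_sum)

lemma face_y_inner_collision:
  assumes "1 \<le> i" "i < q"
  shows "face_y n q i i = Var (Y i)" "face_y n q i (i + 1) = Var (Y i)"
  using assms by (simp_all add: face_y_def)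

lemma red_mult_inner_face_dy_prod:
  assumes "1 \<le> i" "i < q" "finite S" "i \<in> S" "i + 1 \<in> S"
  shows "red (c * face_dy_prod n q i S) = 0"
proof -
  let ?dy = "Var (DY i)" and ?R = "face_dy_prod n q i (S - {i, i + 1})"
  have "dd (face_y n q i i) = ?dy" "dd (face_y n q i (i + 1)) = ?dy"
    using face_y_inner_collision[OF assms(1,2)] by (simp_all add: dd_Var dvar_def)
  then have "face_dy_prod n q i S = ?dy * (?dy * ?R)"
    using prod_collision[of S i "i + 1" "\<lambda>j. dd (face_y n q i j)"] assms(3-5)
    unfolding face_dy_prod_def by simp
  then have "c * face_dy_prod n q i S = ?dy * (?dy * (c * ?R))"
    by (simp add: ac_simps)
  then show ?thesis by (simp add: red_dvar_square_mult is_dvar_def)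
qed

lemma face_dy_prod_top: "1 \<le> q \<Longrightarrow> finite S \<Longrightarrow> q \<in> S \<Longrightarrow> face_dy_prod n q q S = 0"
  unfolding face_dy_prod_def
  by (rule prod_zero) (auto intro!: bexI[of _ q] simp: face_y_def dd_def)

lemma face_dy_prod_zeroth:
  "finite S \<Longrightarrow> 1 \<in> S \<Longrightarrow> face_dy_prod n q 0 S = dd (Var X ^ Suc n) * face_dy_prod n q 0 (S - {1})"
  unfolding face_dy_prod_def by (simp add: prod.remove face_y_def)

lemma red_DX_mult_zeroth_face_dy_prod:
  assumes "even n" "finite S" "1 \<in> S"
  shows "red (Var DX * (c * face_dy_prod n q 0 S)) = 0"
proof -
  have "Var DX * (c * face_dy_prod n q 0 S) =
      Var DX * (Var DX * (c * Var X ^ n * face_dy_prod n q 0 (S - {1})))"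
    using assms by (simp add: face_dy_prod_zeroth dd_X_power_even ac_simps del: power_Suc)
  then show ?thesis by (simp add: red_dvar_square_mult is_dvar_def)
qed

lemma faceO_beta_inner:
  assumes "1 \<le> i" "i < q"
  shows "faceO n q i (beta q) = 0"
proof -
  define F where "F l = red (Var DX * (face_y n q i l * face_dy_prod n q i ({1..q} - {l})))" for l
  have "red (Var X * face_dy_prod n q i {1..q}) = 0"
    using assms by (intro red_mult_inner_face_dy_prod) auto
  moreover have "F l = 0" if "l \<in> {1..q} - {i, i + 1}" for l
    unfolding F_def mult.assoc[symmetric]
    using assms that by (intro red_mult_inner_face_dy_prod) auto
  then have "(\<Sum>l\<in>{1..q}. F l) = F i + F (i + 1)"
    using assms by (subst sum.mono_neutral_right[of "{1..q}" "{i, i + 1}"]) auto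
  moreover have "F (i + 1) = F i"
    using assms face_y_inner_collision[OF assms, of n]
      prod_remove_collision[of "{1..q}" i "i + 1" "\<lambda>j. dd (face_y n q i j)"]
    by (simp add: F_def face_dy_prod_def)
  ultimately show ?thesis by (simp add: faceO_beta F_def)
qed

lemma faceO_beta_top:
  assumes "1 \<le> q"
  shows "faceO n q q (beta q) = 0"
proof -
  have "red (Var DX * (face_y n q q l * face_dy_prod n q q ({1..q} - {l}))) = 0" if "l \<in> {1..q}" for l
    using assms that by (cases "l = q") (simp_all add: face_y_def face_dy_prod_top red_zero)
  then show ?thesis
    using assms by (simp add: faceO_beta face_dy_prod_top red_zero)
qed

lemma faceO_beta_zeroth:
  assumes "even n" "0 < q"
  shows "faceO n q 0 (beta q) = 0"
proof -
  define F where "F l = red (Var DX * (face_y n q 0 l * face_dy_prod n q 0 ({1..q} - {l})))" for l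
  have "face_dy_prod n q 0 {1..q} = Var X ^ n * Var DX * face_dy_prod n q 0 ({1..q} - {1})"
    using assms by (simp add: face_dy_prod_zeroth dd_X_power_even del: power_Suc)
  then have "Var X * face_dy_prod n q 0 {1..q} =
      Var DX * (face_y n q 0 1 * face_dy_prod n q 0 ({1..q} - {1}))"
    by (simp add: face_y_def ac_simps)
  then have "red (Var X * face_dy_prod n q 0 {1..q}) = F 1"
    by (simp add: F_def)
  moreover have "F l = 0" if "l \<in> {1..q} - {1}" for l
    unfolding F_def using assms that by (intro red_DX_mult_zeroth_face_dy_prod) auto
  then have "(\<Sum>l\<in>{1..q}. F l) = F 1"
    using assms by (subst sum.mono_neutral_right[of "{1..q}" "{1}"]) auto
  ultimately show ?thesis by (simp add: faceO_beta F_def)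
qed

lemma is_cycleI:
  assumes "p \<in> Om q" "\<And>i. i \<le> q \<Longrightarrow> 0 < q \<Longrightarrow> faceO n q i p = 0"
  shows "is_cycle n q p"
  using assms by (auto simp: is_cycle_def Nq_def)

lemma face_index_cases:
  fixes i q :: nat
  assumes "i \<le> q" "0 < q"
  obtains "i = 0" | "1 \<le> i" "i < q" | "i = q" "1 \<le> q"
proof -
  have "i = 0 \<or> (1 \<le> i \<and> i < q) \<or> (i = q \<and> 1 \<le> q)"
    using assms by arith
  then show thesis using that by blast
qed

lemma omega_is_cycle:
  assumes "odd n"
  shows "is_cycle n q (omega q)"
proof (rule is_cycleI[OF omega_in_Om])
  fix i assume "i \<le> q" "0 < q"
  then show "faceO n q i (omega q) = 0"
  proof (cases rule: face_index_cases)
    case 1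
    then show ?thesis using assms \<open>0 < q\<close>
      by (simp add: faceO_omega face_dy_prod_zeroth dd_X_power_odd red_zero del: power_Suc)
  next
    case 2
    then show ?thesis using red_mult_inner_face_dy_prod[OF 2, of "{1..q}" 1]
      by (simp add: faceO_omega)
  next
    case 3
    then show ?thesis by (simp add: faceO_omega face_dy_prod_top red_zero)
  qed
qed

lemma alpha_is_cycle:
  assumes "even n"
  shows "is_cycle n q (alpha q)"
proof (rule is_cycleI[OF alpha_in_Om])
  fix i assume "i \<le> q" "0 < q"
  then show "faceO n q i (alpha q) = 0"
  proof (cases rule: face_index_cases)
    case 1
    then show ?thesis using assms \<open>0 < q\<close> red_DX_mult_zeroth_face_dy_prod[of n "{1..q}" 1 q]
      by (simp add: faceO_alpha)
  next
    case 2
    then show ?thesis using red_mult_inner_face_dy_prod[OF 2, of "{1..q}" "Var DX"]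
      by (simp add: faceO_alpha)
  next
    case 3
    then show ?thesis by (simp add: faceO_alpha face_dy_prod_top red_zero)
  qed
qed

lemma beta_is_cycle:
  assumes "even n"
  shows "is_cycle n q (beta q)"
proof (rule is_cycleI[OF beta_in_Om])
  fix i assume "i \<le> q" "0 < q"
  then show "faceO n q i (beta q) = 0"
    by (cases rule: face_index_cases)
      (simp_all add: assms \<open>0 < q\<close> faceO_beta_zeroth faceO_beta_inner faceO_beta_top)
qed

section \<open>Degeneracy maps\<close>

definition degen_index :: "nat \<Rightarrow> nat \<Rightarrow> nat" where
  "degen_index i j = (if j \<le> i then j else j + 1)"

lemma degen_y_eq: "degen_y i j = Var (Y (degen_index i j))"
  by (simp add: degen_y_def degen_index_def)

lemma inj_degen_index: "inj (degen_index i)"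
  by (auto simp: inj_def degen_index_def split: if_splits)

lemma degen_index_image_interval:
  assumes "i \<le> q"
  shows "degen_index i ` {1..q} = {1..q + 1} - {i + 1}"
proof
  show "degen_index i ` {1..q} \<subseteq> {1..q + 1} - {i + 1}"
    by (auto simp: degen_index_def)
  show "{1..q + 1} - {i + 1} \<subseteq> degen_index i ` {1..q}"
  proof
    fix k assume "k \<in> {1..q + 1} - {i + 1}"
    then show "k \<in> degen_index i ` {1..q}"
      using assms by (intro image_eqI[of _ _ "if k \<le> i then k else k - 1"]) (auto simp: degen_index_def)
  qed
qed

lemma degen_index_image_interval_diff:
  "i \<le> q \<Longrightarrow> degen_index i ` ({1..q} - A) = {1..q + 1} - insert (i + 1) (degen_index i ` A)"
  unfolding image_set_diff[OF inj_degen_index] by (auto simp only: degen_index_image_interval)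

lemma subst_degen_dy_prod:
  "subst (omega_map (degen_y i)) (dy_prod S) = dy_prod (degen_index i ` S)"
proof -
  have "subst (omega_map (degen_y i)) (dy_prod S) = (\<Prod>j\<in>S. Var (DY (degen_index i j)))"
    by (simp add: dy_prod_def subst_prod subst_Var degen_y_eq dd_Var dvar_def)
  also have "\<dots> = dy_prod (degen_index i ` S)"
    by (simp add: dy_prod_def prod.reindex[OF inj_on_subset[OF inj_degen_index]])
  finally show ?thesis .
qed

lemma degenO_dy_prod: "finite S \<Longrightarrow> degenO i (dy_prod S) = dy_prod (degen_index i ` S)"
  by (simp add: degenO_def subst_degen_dy_prod red_dy_prod)

lemma degenO_Y_mult_dy_prod:
  "finite S \<Longrightarrow>
    degenO i (Var (Y r) * dy_prod S) = Var (Y (degen_index i r)) * dy_prod (degen_index i ` S)"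
  by (simp add: degenO_def subst_mult subst_Var subst_degen_dy_prod degen_y_eq red_Var_mult_dy_prod)

lemma degenO_in_Dq: "p \<in> Om q \<Longrightarrow> i \<le> q \<Longrightarrow> degenO i p \<in> Dq (q + 1)"
  unfolding Dq_def f2span_def by (auto intro!: exI[of _ "{degenO i p}"])

lemma omega_i_in_Dq:
  assumes "1 \<le> r" "r \<le> q + 1"
  shows "omega_i (q + 1) r \<in> Dq (q + 1)"
proof -
  have "omega_i (q + 1) r = degenO (r - 1) (dy_prod {1..q})"
    using assms degen_index_image_interval_diff[of "r - 1" q "{}"]
    by (simp add: omega_i_eq degenO_dy_prod)
  also have "\<dots> \<in> Dq (q + 1)"
    using assms by (intro degenO_in_Dq dy_prod_in_Om) auto
  finally show ?thesis .
qed

lemma omega_ij_in_Dq: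
  assumes "1 \<le> j" "j < k" "k \<le> q + 1"
  shows "omega_ij (q + 1) j k \<in> Dq (q + 1)"
proof -
  have "degen_index (j - 1) (k - 1) = k"
    using assms by (simp add: degen_index_def)
  then have "omega_ij (q + 1) j k = degenO (j - 1) (dy_prod ({1..q} - {k - 1}))"
    using assms degen_index_image_interval_diff[of "j - 1" q "{k - 1}"]
    by (simp add: omega_ij_eq degenO_dy_prod)
  also have "\<dots> \<in> Dq (q + 1)"
    using assms by (intro degenO_in_Dq dy_prod_in_Om) auto
  finally show ?thesis .
qed

lemma Y_mult_omega_ij_in_Dq:
  assumes "1 \<le> j" "j < k" "k \<le> q + 1" "1 \<le> r" "r \<le> q + 1"
  shows "red (Var (Y r) * omega_ij (q + 1) j k) \<in> Dq (q + 1)"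
proof (cases "r = j")
  case True
  have "degen_index (k - 1) j = j"
    using assms by (simp add: degen_index_def)
  then have "red (Var (Y r) * omega_ij (q + 1) j k) =
      degenO (k - 1) (Var (Y j) * dy_prod ({1..q} - {j}))"
    using assms True degen_index_image_interval_diff[of "k - 1" q "{j}"]
    by (simp add: omega_ij_eq red_Var_mult_dy_prod degenO_Y_mult_dy_prod insert_commute)
  also have "\<dots> \<in> Dq (q + 1)"
    using assms by (intro degenO_in_Dq Var_mult_dy_prod_in_Om) (auto simp: allowed_def)
  finally show ?thesis .
next
  case False
  define r' where "r' = (if r < j then r else r - 1)"
  have "degen_index (j - 1) r' = r" "degen_index (j - 1) (k - 1) = k"
    using assms False by (auto simp: degen_index_def r'_def)
  then have "red (Var (Y r) * omega_ij (q + 1) j k) =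
      degenO (j - 1) (Var (Y r') * dy_prod ({1..q} - {k - 1}))"
    using assms degen_index_image_interval_diff[of "j - 1" q "{k - 1}"]
    by (simp add: omega_ij_eq red_Var_mult_dy_prod degenO_Y_mult_dy_prod)
  also have "\<dots> \<in> Dq (q + 1)"
    using assms False by (intro degenO_in_Dq Var_mult_dy_prod_in_Om) (auto simp: allowed_def r'_def image_iff)
  finally show ?thesis .
qed

theorem lemma2p3:
  fixes n q :: nat
  assumes "n \<ge> 1"
  shows "(odd n \<longrightarrow> is_cycle n q (omega q))
       \<and> (even n \<longrightarrow> is_cycle n q (alpha q) \<and> is_cycle n q (beta q))
       \<and> (\<forall>r. 1 \<le> r \<and> r \<le> q + 1 \<longrightarrow> omega_i (q + 1) r \<in> Dq (q + 1))
       \<and> (\<forall>j k. 1 \<le> j \<and> j < k \<and> k \<le> q + 1 \<longrightarrow>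
             omega_ij (q + 1) j k \<in> Dq (q + 1)
           \<and> (\<forall>r. 1 \<le> r \<and> r \<le> q + 1 \<longrightarrow>
                red (Var (Y r) * omega_ij (q + 1) j k) \<in> Dq (q + 1)))"
proof (intro conjI impI allI)
  show "odd n \<Longrightarrow> is_cycle n q (omega q)" by (rule omega_is_cycle)
  show "even n \<Longrightarrow> is_cycle n q (alpha q)" by (rule alpha_is_cycle)
  show "even n \<Longrightarrow> is_cycle n q (beta q)" by (rule beta_is_cycle)
  show "omega_i (q + 1) r \<in> Dq (q + 1)" if "1 \<le> r \<and> r \<le> q + 1" for r
    using that omega_i_in_Dq by blast
  show "omega_ij (q + 1) j k \<in> Dq (q + 1)" if "1 \<le> j \<and> j < k \<and> k \<le> q + 1" for j k
    using that omega_ij_in_Dq by blast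
  show "red (Var (Y r) * omega_ij (q + 1) j k) \<in> Dq (q + 1)"
    if "1 \<le> j \<and> j < k \<and> k \<le> q + 1" "1 \<le> r \<and> r \<le> q + 1" for j k r
    using that Y_mult_omega_ij_in_Dq by blast
qed

end
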